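(* For every integer $j\ge 0$, $$\int_0^1\frac{\operatorname{Ti}_{2j+1}(t)}{1+t^2}\,dt=\frac12\sum_{k=0}^{2j}(-1)^k\,\beta(k+1)\,\beta(2j-k+1).$$
   Context: The inverse tangent integral of order $r\ge1$ is $\operatorname{Ti}_r(x)=\sum_{k=1}^\infty\frac{(-1)^{k-1}x^{2k-1}}{(2k-1)^r}$ for $|x|\le 1$. The Dirichlet beta function is $\beta(r)=\sum_{k=1}^\infty \frac{(-1)^{k-1}}{(2k-1)^r}=\operatorname{Ti}_r(1)$ for integers $r\ge1$. *)

theory Defs
  imports "HOL-Analysis.Analysis"
begin

text \<open>Inverse tangent integral of order r:
  Ti_r(x) = sum_{k>=1} (-1)^(k-1) x^(2k-1) / (2k-1)^r, written with index k = n+1.\<close>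
definition Ti :: "nat \<Rightarrow> real \<Rightarrow> real" where
  "Ti r x = (\<Sum>n. (-1) ^ n * x ^ (2 * n + 1) / (real (2 * n + 1)) ^ r)"

definition dbeta :: "nat \<Rightarrow> real" where
  "dbeta r = (\<Sum>n. (-1) ^ n / (real (2 * n + 1)) ^ r)"

end

theory Submission
  imports Defs
begin

text \<open>Let dTi r be the derivative of Ti (r + 1) on ]-1, 1[, namely Ti r t / t for r \<ge> 1 and
  1 / (1 + t^2) for r = 0, and let J(a, b) = Ti_dTi_integral a b be the integral of Ti a * dTi b
  over [0, 1]. Integration by parts gives J(b + 1, a) + J(a + 1, b) = beta(a + 1) beta(b + 1), and
  J(a, b) = J(b, a) for a, b \<ge> 1 because the integrand is then Ti a t Ti b t / t. Alternating the
  two identities, starting from the integral in question J(2j + 1, 0), moves one order at a time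
  from the first to the second argument and produces the alternating sum, until J(1, 2j) is
  reached; as J(1, 2j) + J(2j + 1, 0) = beta 1 beta(2j + 1), the integral appears twice.\<close>

lemma continuous_on_suminf_M_test:
  fixes f :: "nat \<Rightarrow> 'a::topological_space \<Rightarrow> 'b::banach"
  assumes "\<And>n. continuous_on A (f n)"
    and "\<And>n x. x \<in> A \<Longrightarrow> norm (f n x) \<le> M n" and "summable M"
  shows "continuous_on A (\<lambda>x. \<Sum>n. f n x)"
  by (rule uniform_limit_theorem[OF _ Weierstrass_m_test[OF assms(2,3)]])
     (auto intro!: always_eventually continuous_on_sum assms(1))

lemma norm_odd_term_eq:
  fixes x :: real
  shows "norm ((-1) ^ n * x ^ m / real (2 * n + 1) ^ r) = \<bar>x\<bar> ^ m / real (2 * n + 1) ^ r"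
  by (simp add: abs_mult power_abs)

lemma norm_odd_term_le_power:
  fixes x :: real
  shows "norm ((-1) ^ n * x ^ m / real (2 * n + 1) ^ r) \<le> \<bar>x\<bar> ^ m"
  unfolding norm_odd_term_eq by (simp add: divide_le_eq mult_le_cancel_left1)

lemma norm_odd_term_le_inverse_power:
  fixes x :: real
  assumes "\<bar>x\<bar> \<le> 1"
  shows "norm ((-1) ^ n * x ^ m / real (2 * n + 1) ^ r) \<le> 1 / real (2 * n + 1) ^ r"
  unfolding norm_odd_term_eq using assms by (intro divide_right_mono power_le_one) auto

lemma summable_inverse_odd_power:
  assumes "r \<ge> 2"
  shows "summable (\<lambda>n. 1 / real (2 * n + 1) ^ r)"
proof (rule summable_comparison_test')
  show "summable (\<lambda>n. 1 / real (Suc n) ^ 2)"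
    using inverse_power_summable[of 2, where 'a=real]
    by (subst summable_Suc_iff) (simp add: inverse_eq_divide)
  fix n :: nat
  have "real (Suc n) ^ 2 \<le> real (2 * n + 1) ^ 2"
    by (intro power_mono) auto
  also have "\<dots> \<le> real (2 * n + 1) ^ r"
    using assms by (intro power_increasing) auto
  finally show "norm (1 / real (2 * n + 1) ^ r) \<le> 1 / real (Suc n) ^ 2"
    by (simp add: frac_le)
qed

lemma Ti_0 [simp]: "Ti r 0 = 0"
  by (simp add: Ti_def)

lemma Ti_1 [simp]: "Ti r 1 = dbeta r"
  by (simp add: Ti_def dbeta_def)

lemma Ti_1_eq_arctan: "\<bar>t\<bar> \<le> 1 \<Longrightarrow> Ti 1 t = arctan t"
  using arctan_series[of t] by (simp add: Ti_def mult.commute)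

lemma continuous_on_Ti:
  assumes "r \<ge> 1"
  shows "continuous_on {-1..1} (Ti r)"
proof (cases "r = 1")
  case True
  have "continuous_on {-1..1} (Ti 1)"
  proof (rule continuous_on_eq)
    show "continuous_on {-1..1} arctan"
      by (intro continuous_intros)
    show "arctan t = Ti 1 t" if "t \<in> {-1..1}" for t
      using that Ti_1_eq_arctan[of t] by (simp add: abs_le_iff)
  qed
  then show ?thesis
    using True by simp
next
  case False
  show ?thesis
    unfolding Ti_def
  proof (rule continuous_on_suminf_M_test)
    show "summable (\<lambda>n. 1 / real (2 * n + 1) ^ r)"
      using assms False by (intro summable_inverse_odd_power) auto
    show "continuous_on {-1..1} (\<lambda>x. (-1) ^ n * x ^ (2 * n + 1) / real (2 * n + 1) ^ r)" for n
      by (intro continuous_intros) auto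
    show "norm ((-1) ^ n * x ^ (2 * n + 1) / real (2 * n + 1) ^ r) \<le> 1 / real (2 * n + 1) ^ r"
      if "x \<in> {-1..1}" for n x
      using that by (intro norm_odd_term_le_inverse_power) auto
  qed
qed

definition dTi :: "nat \<Rightarrow> real \<Rightarrow> real" where
  "dTi r t = (if r = 0 then 1 / (1 + t ^ 2) else if t = 0 then 1 else Ti r t / t)"

lemma summable_dTi_series:
  fixes t :: real
  assumes "\<bar>t\<bar> < 1"
  shows "summable (\<lambda>n. (-1) ^ n * t ^ (2 * n) / real (2 * n + 1) ^ r)"
proof (rule summable_comparison_test')
  show "summable (\<lambda>n. (t ^ 2) ^ n)"
    using assms by (intro summable_geometric) (simp add: abs_square_less_1)
  show "norm ((-1) ^ n * t ^ (2 * n) / real (2 * n + 1) ^ r) \<le> (t ^ 2) ^ n" for n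
    using norm_odd_term_le_power[of n t "2 * n" r] by (simp add: power_mult power_even_abs)
qed

lemma sums_dTi:
  fixes t :: real
  assumes "\<bar>t\<bar> < 1"
  shows "(\<lambda>n. (-1) ^ n * t ^ (2 * n) / real (2 * n + 1) ^ r) sums dTi r t"
proof -
  let ?a = "\<lambda>n. (-1) ^ n * t ^ (2 * n) / real (2 * n + 1) ^ r"
  consider "r = 0" | "r > 0" "t = 0" | "r > 0" "t \<noteq> 0"
    by blast
  then show ?thesis
  proof cases
    case 1
    have "norm (- (t ^ 2)) < 1"
      using assms by (simp add: abs_square_less_1)
    from geometric_sums[OF this] show ?thesis
      using 1 by (simp add: dTi_def power_minus[of "t ^ 2"] power_mult)
  next
    case 2
    then have "?a = (\<lambda>n. if n = 0 then 1 else 0)"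
      by (auto simp: fun_eq_iff)
    then show ?thesis
      using 2 sums_single[of 0 "\<lambda>_. 1::real"] by (simp add: dTi_def)
  next
    case 3
    have "?a sums suminf ?a"
      using summable_dTi_series[OF assms] by (rule summable_sums)
    moreover have "Ti r t = t * suminf ?a"
      using sums_mult[OF \<open>?a sums suminf ?a\<close>, of t]
      by (simp add: Ti_def sums_iff mult_ac)
    ultimately show ?thesis
      using 3 by (simp add: dTi_def)
  qed
qed

lemma has_real_derivative_Ti:
  fixes t :: real
  assumes "\<bar>t\<bar> < 1"
  shows "(Ti (Suc r) has_real_derivative dTi r t) (at t)"
proof -
  define R where "R = (1 + \<bar>t\<bar>) / 2"
  have R: "\<bar>t\<bar> < R" "R < 1"
    using assms by (auto simp: R_def)
  define f where "f n x = (-1) ^ n * x ^ (2 * n + 1) / real (2 * n + 1) ^ Suc r" for n and x :: real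
  define f' where "f' n x = (-1) ^ n * x ^ (2 * n) / real (2 * n + 1) ^ r" for n and x :: real
  have "(f n has_field_derivative f' n x) (at x within {-R..R})" for n x
  proof -
    have "(f n has_field_derivative
        (-1) ^ n * (real (2 * n + 1) * x ^ (2 * n)) / real (2 * n + 1) ^ Suc r)
        (at x within {-R..R})"
      using DERIV_pow[of "2 * n + 1" x "{-R..R}"]
      unfolding f_def by (intro DERIV_cdivide DERIV_cmult) simp
    then show ?thesis
      by (simp add: f'_def divide_simps del: of_nat_Suc)
  qed
  moreover have "uniformly_convergent_on {-R..R} (\<lambda>n x. \<Sum>i<n. f' i x)"
  proof (rule Weierstrass_m_test')
    show "summable (\<lambda>n. (R ^ 2) ^ n)"
      using R by (intro summable_geometric) (simp add: abs_square_less_1)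
    show "norm (f' n x) \<le> (R ^ 2) ^ n" if "x \<in> {-R..R}" for n x
    proof -
      have "norm (f' n x) \<le> \<bar>x\<bar> ^ (2 * n)"
        unfolding f'_def by (rule norm_odd_term_le_power)
      also have "\<dots> \<le> (R ^ 2) ^ n"
        using that by (auto simp: power_mult[symmetric] intro!: power_mono)
      finally show ?thesis .
    qed
  qed
  ultimately have "((\<lambda>x. \<Sum>n. f n x) has_field_derivative (\<Sum>n. f' n t)) (at t)"
    using R by (intro has_field_derivative_series'(2)[of "{-R..R}" f f' 0 t]) (auto simp: f_def)
  also have "(\<lambda>x. \<Sum>n. f n x) = Ti (Suc r)"
    by (simp add: fun_eq_iff Ti_def f_def)
  also have "(\<Sum>n. f' n t) = dTi r t"
    using sums_dTi[OF assms] by (simp add: f'_def sums_iff)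
  finally show ?thesis .
qed

lemma continuous_on_dTi: "continuous_on {0..1} (dTi r)"
proof (cases "r = 0")
  case True
  have "continuous_on {0..1} (\<lambda>t::real. 1 / (1 + t ^ 2))"
    by (intro continuous_intros) (simp add: add_nonneg_eq_0_iff)
  then show ?thesis
    using True by (simp add: dTi_def[abs_def])
next
  case False
  have "continuous_on {0..1/2} (\<lambda>t. \<Sum>n. (-1) ^ n * t ^ (2 * n) / real (2 * n + 1) ^ r)"
  proof (rule continuous_on_suminf_M_test)
    show "summable (\<lambda>n. (1/4::real) ^ n)"
      by (intro summable_geometric) simp
    show "continuous_on {0..1/2} (\<lambda>t::real. (-1) ^ n * t ^ (2 * n) / real (2 * n + 1) ^ r)" for n
      by (intro continuous_intros) auto
    show "norm ((-1) ^ n * t ^ (2 * n) / real (2 * n + 1) ^ r) \<le> (1/4) ^ n"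
      if "t \<in> {0..1/2}" for n and t :: real
    proof -
      have "norm ((-1) ^ n * t ^ (2 * n) / real (2 * n + 1) ^ r) \<le> \<bar>t\<bar> ^ (2 * n)"
        by (rule norm_odd_term_le_power)
      also have "\<dots> \<le> (1/2) ^ (2 * n)"
        using that by (intro power_mono) auto
      finally show ?thesis
        by (simp add: power_mult power2_eq_square)
    qed
  qed
  then have near_0: "continuous_on {0..1/2} (dTi r)"
    by (rule continuous_on_eq) (use sums_dTi in \<open>auto simp: sums_iff\<close>)
  have "continuous_on {1/2..1} (\<lambda>t. Ti r t / t)"
    using False by (intro continuous_intros continuous_on_subset[OF continuous_on_Ti]) auto
  then have away_from_0: "continuous_on {1/2..1} (dTi r)"
    by (rule continuous_on_eq) (use False in \<open>auto simp: dTi_def\<close>)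
  have "{0..1::real} = {0..1/2} \<union> {1/2..1}"
    by auto
  with continuous_on_closed_Un[OF _ _ near_0 away_from_0] show ?thesis
    by simp
qed

definition Ti_dTi_integral :: "nat \<Rightarrow> nat \<Rightarrow> real" where
  "Ti_dTi_integral a b = integral {0..1} (\<lambda>t. Ti a t * dTi b t)"

lemma Ti_dTi_integrable: "a \<ge> 1 \<Longrightarrow> (\<lambda>t. Ti a t * dTi b t) integrable_on {0..1}"
  by (intro integrable_continuous_real continuous_on_mult
      continuous_on_subset[OF continuous_on_Ti] continuous_on_dTi) auto

lemma Ti_dTi_integral_by_parts:
  "Ti_dTi_integral (Suc b) a + Ti_dTi_integral (Suc a) b = dbeta (Suc a) * dbeta (Suc b)"
proof -
  let ?h = "\<lambda>t. Ti (Suc a) t * Ti (Suc b) t"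
  let ?h' = "\<lambda>t. Ti (Suc b) t * dTi a t + Ti (Suc a) t * dTi b t"
  have "(?h' has_integral (?h 1 - ?h 0)) {0..1}"
  proof (rule fundamental_theorem_of_calculus_interior)
    show "continuous_on {0..1} ?h"
      by (intro continuous_intros continuous_on_subset[OF continuous_on_Ti]) auto
    show "(?h has_vector_derivative ?h' x) (at x)" if "x \<in> {0<..<1}" for x
    proof -
      have "\<bar>x\<bar> < 1"
        using that by auto
      from DERIV_mult[OF has_real_derivative_Ti[OF this] has_real_derivative_Ti[OF this]]
      show ?thesis
        by (simp add: has_real_derivative_iff_has_vector_derivative[symmetric] mult.commute)
    qed
  qed simp
  moreover have "integral {0..1} ?h' = Ti_dTi_integral (Suc b) a + Ti_dTi_integral (Suc a) b"
    unfolding Ti_dTi_integral_def by (subst integral_add) (auto intro: Ti_dTi_integrable)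
  ultimately show ?thesis
    by (simp add: integral_unique)
qed

lemma Ti_dTi_integral_commute:
  "a \<ge> 1 \<Longrightarrow> b \<ge> 1 \<Longrightarrow> Ti_dTi_integral a b = Ti_dTi_integral b a"
  unfolding Ti_dTi_integral_def by (intro integral_cong) (auto simp: dTi_def)

lemma Ti_dTi_integral_telescope:
  assumes "m \<le> n"
  shows "Ti_dTi_integral (n + 1) 0 =
    (\<Sum>k<m. (-1) ^ k * dbeta (k + 1) * dbeta (n - k + 1)) + (-1) ^ m * Ti_dTi_integral (n - m + 1) m"
  using assms
proof (induction m)
  case 0
  then show ?case
    by simp
next
  case (Suc m)
  then have "m < n"
    by simp
  have "Ti_dTi_integral (n - m + 1) m = dbeta (m + 1) * dbeta (n - m + 1) - Ti_dTi_integral (m + 1) (n - m)"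
    using Ti_dTi_integral_by_parts[of "n - m" m] by simp
  also have "Ti_dTi_integral (m + 1) (n - m) = Ti_dTi_integral (n - Suc m + 1) (Suc m)"
    using \<open>m < n\<close> by (simp add: Ti_dTi_integral_commute Suc_diff_Suc)
  finally have step: "Ti_dTi_integral (n - m + 1) m =
      dbeta (m + 1) * dbeta (n - m + 1) - Ti_dTi_integral (n - Suc m + 1) (Suc m)" .
  show ?case
    using Suc.IH \<open>m < n\<close> unfolding step by (simp add: algebra_simps)
qed

theorem lemma2:
  fixes j :: nat
  shows "integral {0..1} (\<lambda>t. Ti (2 * j + 1) t / (1 + t ^ 2)) =
         (1 / 2) * (\<Sum>k = 0..2 * j. (-1) ^ k * dbeta (k + 1) * dbeta (2 * j - k + 1))"
proof -
  define n where "n = 2 * j"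
  let ?S = "\<Sum>k<n. (-1) ^ k * dbeta (k + 1) * dbeta (n - k + 1)"
  have "integral {0..1} (\<lambda>t. Ti (2 * j + 1) t / (1 + t ^ 2)) = Ti_dTi_integral (n + 1) 0"
    by (simp add: Ti_dTi_integral_def dTi_def n_def)
  moreover have "Ti_dTi_integral (n + 1) 0 = ?S + Ti_dTi_integral 1 n"
    using Ti_dTi_integral_telescope[of n n] by (simp add: n_def)
  moreover have "Ti_dTi_integral 1 n + Ti_dTi_integral (n + 1) 0 = dbeta (n + 1) * dbeta 1"
    using Ti_dTi_integral_by_parts[of n 0] by (simp add: mult.commute)
  moreover have "(\<Sum>k = 0..n. (-1) ^ k * dbeta (k + 1) * dbeta (n - k + 1)) = ?S + dbeta (n + 1) * dbeta 1"
    by (simp add: n_def atLeast0AtMost lessThan_Suc_atMost[symmetric])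
  ultimately show ?thesis
    by (simp add: n_def)
qed

end
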